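(* Let $M$ be a measure-many quantum finite automaton that uses both a left and a right end-marker. Then there exists a measure-many quantum finite automaton $M'$ that uses only a right end-marker and is equivalent to $M$, i.e. for every $x\in\Sigma^*$ the probability that $M$ accepts $x$ equals the probability that $M'$ accepts $x$.
   Context: A measure-many QFA (MM-QFA) over $\Sigma$ with one (right) end-marker is a tuple $(Q,\Sigma,\{U_\sigma\}_{\sigma\in\Sigma\cup\{\$\}},q_0,Q_{acc},Q_{rej})$ with $Q$ finite indexing an orthonormal basis of $\mathbb{C}^Q$, end-marker $\$\notin\Sigma$, unitary $U_\sigma$, initial state $q_0$, and $Q$ partitioned into $Q_{acc},Q_{rej},Q_{non}$ with orthogonal projections $P_{acc},P_{rej},P_{non}$. On input $x$ it processes the symbols of $x\$$ maintaining $(\psi,p_{acc},p_{rej})$, initially $(|q_0\rangle,0,0)$; on reading $\sigma$: $\psi'=U_\sigma\psi$, $p_{acc}\mathrel{+}=\|P_{acc}\psi'\|^2$, $p_{rej}\mathrel{+}=\|P_{rej}\psi'\|^2$, $\psi\leftarrow P_{non}\psi'$; the acceptance probability is the final $p_{acc}$. An MM-QFA with both end-markers additionally has a unitary $U_{¢}$ for a left end-marker ${¢}\notin\Sigma\cup\{\$\}$ and processes ${¢}x\$$ in the same way (including the measurement after reading ${¢}$). *)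

theory Defs
  imports Complex_Main
begin

text \<open>States of an automaton with n basis states are the indices {0..<n};
  vectors of C^Q are functions nat => complex (only entries below n matter),
  operators are n x n matrices given as functions nat => nat => complex.\<close>

definition mvec :: "nat \<Rightarrow> (nat \<Rightarrow> nat \<Rightarrow> complex) \<Rightarrow> (nat \<Rightarrow> complex) \<Rightarrow> (nat \<Rightarrow> complex)" where
  "mvec n U v = (\<lambda>i. if i < n then (\<Sum>j<n. U i j * v j) else 0)"

definition unitary_mat :: "nat \<Rightarrow> (nat \<Rightarrow> nat \<Rightarrow> complex) \<Rightarrow> bool" where
  "unitary_mat n U \<longleftrightarrow>
     (\<forall>i<n. \<forall>k<n. (\<Sum>j<n. cnj (U j i) * U j k) = (if i = k then 1 else 0)) \<and>
     (\<forall>i<n. \<forall>k<n. (\<Sum>j<n. U i j * cnj (U k j)) = (if i = k then 1 else 0))"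

definition proj :: "nat set \<Rightarrow> (nat \<Rightarrow> complex) \<Rightarrow> (nat \<Rightarrow> complex)" where
  "proj S v = (\<lambda>i. if i \<in> S then v i else 0)"

definition sqnorm :: "nat \<Rightarrow> (nat \<Rightarrow> complex) \<Rightarrow> real" where
  "sqnorm n v = (\<Sum>i<n. (cmod (v i))^2)"

text \<open>One step of an MM-QFA: apply the unitary, measure, keep the non-halting part.
  The configuration is (psi, p_acc, p_rej).\<close>
definition mm_step :: "nat \<Rightarrow> nat set \<Rightarrow> nat set \<Rightarrow>
    (nat \<Rightarrow> complex) \<times> real \<times> real \<Rightarrow> (nat \<Rightarrow> nat \<Rightarrow> complex) \<Rightarrow> (nat \<Rightarrow> complex) \<times> real \<times> real" where
  "mm_step n Acc Rej c U =
     (let \<psi>' = mvec n U (fst c);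
          Non = {..<n} - Acc - Rej
      in (proj Non \<psi>',
          fst (snd c) + sqnorm n (proj Acc \<psi>'),
          snd (snd c) + sqnorm n (proj Rej \<psi>')))"

definition mm_acc_run :: "nat \<Rightarrow> nat \<Rightarrow> nat set \<Rightarrow> nat set \<Rightarrow> (nat \<Rightarrow> nat \<Rightarrow> complex) list \<Rightarrow> real" where
  "mm_acc_run n q0 Acc Rej Us =
     fst (snd (foldl (mm_step n Acc Rej) ((\<lambda>i. if i = q0 then 1 else 0), 0, 0) Us))"

text \<open>MM-QFA with one (right) end-marker over alphabet 'a:
  n states {0..<n}, unitaries U (Some a) for letters a and U None for the end-marker \$,
  initial state q0, accepting states Acc, rejecting states Rej.\<close>
definition mmqfa1 :: "nat \<Rightarrow> ('a option \<Rightarrow> nat \<Rightarrow> nat \<Rightarrow> complex) \<Rightarrow> nat \<Rightarrow> nat set \<Rightarrow> nat set \<Rightarrow> bool" where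
  "mmqfa1 n U q0 Acc Rej \<longleftrightarrow> q0 < n \<and> Acc \<subseteq> {..<n} \<and> Rej \<subseteq> {..<n} \<and> Acc \<inter> Rej = {} \<and>
     (\<forall>\<sigma>. unitary_mat n (U \<sigma>))"

definition acc1 :: "nat \<Rightarrow> ('a option \<Rightarrow> nat \<Rightarrow> nat \<Rightarrow> complex) \<Rightarrow> nat \<Rightarrow> nat set \<Rightarrow> nat set \<Rightarrow> 'a list \<Rightarrow> real" where
  "acc1 n U q0 Acc Rej x = mm_acc_run n q0 Acc Rej (map (\<lambda>a. U (Some a)) x @ [U None])"

text \<open>MM-QFA with both end-markers: additionally a unitary Uc for the left end-marker,
  processing the input (left marker) x \$.\<close>
definition mmqfa2 :: "nat \<Rightarrow> (nat \<Rightarrow> nat \<Rightarrow> complex) \<Rightarrow> ('a option \<Rightarrow> nat \<Rightarrow> nat \<Rightarrow> complex) \<Rightarrow> nat \<Rightarrow> nat set \<Rightarrow> nat set \<Rightarrow> bool" where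
  "mmqfa2 n Uc U q0 Acc Rej \<longleftrightarrow> unitary_mat n Uc \<and> mmqfa1 n U q0 Acc Rej"

definition acc2 :: "nat \<Rightarrow> (nat \<Rightarrow> nat \<Rightarrow> complex) \<Rightarrow> ('a option \<Rightarrow> nat \<Rightarrow> nat \<Rightarrow> complex) \<Rightarrow> nat \<Rightarrow> nat set \<Rightarrow> nat set \<Rightarrow> 'a list \<Rightarrow> real" where
  "acc2 n Uc U q0 Acc Rej x = mm_acc_run n q0 Acc Rej (Uc # map (\<lambda>a. U (Some a)) x @ [U None])"

end

theory Submission
  imports Defs
begin

(* Run the left end-marker step of M once, ahead of time: from |q0> it leaves a non-halting
   vector psi and probabilities a (accepted) and r (rejected) with |psi|^2 + a + r = 1.
   Add three states: a start state s = n, an accepting state n + 1 and a non-halting sink n + 2.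
   The vector v = psi + sqrt a |s> + sqrt r |n+2> has norm 1; the padded letter unitaries act as
   U_sigma on the old states, swap s with n + 1 and fix the sink, so run from v they pay out the
   pending acceptance a at the first symbol and park r forever.  Finally the Householder
   reflection H exchanging v and |s> only touches non-halting coordinates, hence commutes with
   all three projections, and conjugating every unitary by H lets the automaton start in the
   basis state |s> instead of v. *)

section \<open>Unitary matrices\<close>

type_synonym cvec = "nat \<Rightarrow> complex"
type_synonym cmat = "nat \<Rightarrow> nat \<Rightarrow> complex"

lemma delta_mult: "(if P then 1 else 0) * x = (if P then x else (0::'a::{mult_zero, monoid_mult}))"
  by simp

lemma mult_delta: "x * (if P then 1 else 0) = (if P then x else (0::'a::{mult_zero, monoid_mult}))"
  by simp

lemma sum_swap3:
  "(\<Sum>j\<in>A. \<Sum>l\<in>B. \<Sum>m\<in>C. f j l m) = (\<Sum>l\<in>B. \<Sum>m\<in>C. \<Sum>j\<in>A. f j l m)"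
proof -
  have "(\<Sum>j\<in>A. \<Sum>l\<in>B. \<Sum>m\<in>C. f j l m) = (\<Sum>l\<in>B. \<Sum>j\<in>A. \<Sum>m\<in>C. f j l m)"
    by (rule sum.swap)
  also have "\<dots> = (\<Sum>l\<in>B. \<Sum>m\<in>C. \<Sum>j\<in>A. f j l m)"
    by (intro sum.cong refl) (rule sum.swap)
  finally show ?thesis .
qed

definition mmul :: "nat \<Rightarrow> cmat \<Rightarrow> cmat \<Rightarrow> cmat" where
  "mmul n A B = (\<lambda>i j. \<Sum>k<n. A i k * B k j)"

definition adjoint :: "cmat \<Rightarrow> cmat" where
  "adjoint A = (\<lambda>i j. cnj (A j i))"

lemma mvec_mmul: "mvec n (mmul n A B) v = mvec n A (mvec n B v)"
proof
  fix i
  have "(\<Sum>j<n. (\<Sum>k<n. A i k * B k j) * v j) = (\<Sum>j<n. \<Sum>k<n. A i k * B k j * v j)"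
    by (simp add: sum_distrib_right)
  also have "\<dots> = (\<Sum>k<n. \<Sum>j<n. A i k * B k j * v j)"
    by (rule sum.swap)
  also have "\<dots> = (\<Sum>k<n. A i k * (\<Sum>j<n. B k j * v j))"
    by (simp add: sum_distrib_left mult.assoc)
  finally show "mvec n (mmul n A B) v i = mvec n A (mvec n B v) i"
    by (simp add: mvec_def mmul_def)
qed

lemma unitary_matD:
  assumes "unitary_mat n V" and "i < n" and "k < n"
  shows "(\<Sum>j<n. cnj (V j i) * V j k) = (if i = k then 1 else 0)"
    and "(\<Sum>j<n. V i j * cnj (V k j)) = (if i = k then 1 else 0)"
  using assms by (simp_all add: unitary_mat_def)

lemma unitary_adjoint: "unitary_mat n A \<Longrightarrow> unitary_mat n (adjoint A)"
  by (simp add: unitary_mat_def adjoint_def)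

lemma unitary_mmul:
  assumes A: "unitary_mat n A" and B: "unitary_mat n B"
  shows "unitary_mat n (mmul n A B)"
  unfolding unitary_mat_def
proof (intro conjI allI impI)
  fix i k assume i: "i < n" and k: "k < n"
  have "(\<Sum>j<n. cnj (mmul n A B j i) * mmul n A B j k)
      = (\<Sum>j<n. \<Sum>m<n. \<Sum>l<n. cnj (B l i) * B m k * (cnj (A j l) * A j m))"
    by (simp add: mmul_def sum_product mult_ac)
  also have "\<dots> = (\<Sum>m<n. \<Sum>l<n. \<Sum>j<n. cnj (B l i) * B m k * (cnj (A j l) * A j m))"
    by (rule sum_swap3)
  also have "\<dots> = (\<Sum>l<n. cnj (B l i) * B l k)"
    by (simp add: unitary_matD[OF A] sum_distrib_left[symmetric] mult_delta)
  also have "\<dots> = (if i = k then 1 else 0)"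
    by (rule unitary_matD(1)[OF B i k])
  finally show "(\<Sum>j<n. cnj (mmul n A B j i) * mmul n A B j k) = (if i = k then 1 else 0)" .
next
  fix i k assume i: "i < n" and k: "k < n"
  have "(\<Sum>j<n. mmul n A B i j * cnj (mmul n A B k j))
      = (\<Sum>j<n. \<Sum>l<n. \<Sum>m<n. A i l * cnj (A k m) * (B l j * cnj (B m j)))"
    by (simp add: mmul_def sum_product mult_ac)
  also have "\<dots> = (\<Sum>l<n. \<Sum>m<n. \<Sum>j<n. A i l * cnj (A k m) * (B l j * cnj (B m j)))"
    by (rule sum_swap3)
  also have "\<dots> = (\<Sum>l<n. A i l * cnj (A k l))"
    by (simp add: unitary_matD[OF B] sum_distrib_left[symmetric] mult_delta)
  also have "\<dots> = (if i = k then 1 else 0)"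
    by (rule unitary_matD(2)[OF A i k])
  finally show "(\<Sum>j<n. mmul n A B i j * cnj (mmul n A B k j)) = (if i = k then 1 else 0)" .
qed

definition supported :: "nat \<Rightarrow> cvec \<Rightarrow> bool" where
  "supported n v \<longleftrightarrow> (\<forall>i\<ge>n. v i = 0)"

lemma mvec_adjoint_mvec:
  assumes U: "unitary_mat n V" and \<psi>: "supported n \<psi>"
  shows "mvec n (adjoint V) (mvec n V \<psi>) = \<psi>"
proof
  fix i
  show "mvec n (adjoint V) (mvec n V \<psi>) i = \<psi> i"
  proof (cases "i < n")
    case True
    have "(\<Sum>k<n. cnj (V k i) * mvec n V \<psi> k) = (\<Sum>k<n. \<Sum>j<n. \<psi> j * (cnj (V k i) * V k j))"
      by (simp add: mvec_def sum_distrib_left mult_ac)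
    also have "\<dots> = (\<Sum>j<n. \<psi> j * (\<Sum>k<n. cnj (V k i) * V k j))"
      by (subst sum.swap) (simp add: sum_distrib_left)
    also have "\<dots> = \<psi> i"
      using True by (simp add: unitary_matD[OF U] mult_delta)
    finally show ?thesis
      using True by (simp add: mvec_def adjoint_def)
  qed (use \<psi> in \<open>simp add: mvec_def supported_def\<close>)
qed

lemma sqnorm_eq_sum_cnj: "complex_of_real (sqnorm n v) = (\<Sum>i<n. v i * cnj (v i))"
  by (simp only: sqnorm_def of_real_sum complex_norm_square)

lemma sqnorm_nonneg: "0 \<le> sqnorm n v"
  by (simp add: sqnorm_def sum_nonneg)

lemma sqnorm_eq_0_iff: "sqnorm n v = 0 \<longleftrightarrow> (\<forall>i<n. v i = 0)"
  by (auto simp: sqnorm_def sum_nonneg_eq_0_iff)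

lemma sqnorm_mvec:
  assumes U: "unitary_mat n V"
  shows "sqnorm n (mvec n V z) = sqnorm n z"
proof -
  have "complex_of_real (sqnorm n (mvec n V z))
      = (\<Sum>i<n. \<Sum>j<n. \<Sum>k<n. z j * cnj (z k) * (cnj (V i k) * V i j))"
    by (simp add: sqnorm_eq_sum_cnj mvec_def sum_product mult_ac)
  also have "\<dots> = (\<Sum>j<n. \<Sum>k<n. \<Sum>i<n. z j * cnj (z k) * (cnj (V i k) * V i j))"
    by (rule sum_swap3)
  also have "\<dots> = complex_of_real (sqnorm n z)"
    by (simp add: unitary_matD[OF U] sqnorm_eq_sum_cnj sum_distrib_left[symmetric] mult_delta)
  finally show ?thesis
    by (simp only: of_real_eq_iff)
qed

section \<open>Conjugating an MM-QFA\<close>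

definition commutes_proj :: "nat \<Rightarrow> cmat \<Rightarrow> nat set \<Rightarrow> bool" where
  "commutes_proj n V S \<longleftrightarrow> (\<forall>i<n. \<forall>j<n. V i j \<noteq> 0 \<longrightarrow> (i \<in> S \<longleftrightarrow> j \<in> S))"

lemma proj_mvec:
  assumes "commutes_proj n V S"
  shows "proj S (mvec n V y) = mvec n V (proj S y)"
proof
  fix i
  show "proj S (mvec n V y) i = mvec n V (proj S y) i"
  proof (cases "i < n")
    case True
    have "(\<Sum>j<n. V i j * y j) = (\<Sum>j<n. V i j * (if j \<in> S then y j else 0))" if "i \<in> S"
      using assms that True unfolding commutes_proj_def by (intro sum.cong) auto
    moreover have "(\<Sum>j<n. V i j * (if j \<in> S then y j else 0)) = 0" if "i \<notin> S"
      using assms that True unfolding commutes_proj_def by (intro sum.neutral) auto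
    ultimately show ?thesis
      using True by (auto simp: proj_def mvec_def)
  qed (simp add: proj_def mvec_def)
qed

lemma supported_mm_step: "supported n (fst (mm_step n Acc Rej c W))"
  by (simp add: mm_step_def Let_def supported_def proj_def mvec_def)

definition conjugate_by :: "nat \<Rightarrow> cmat \<Rightarrow> cmat \<Rightarrow> cmat" where
  "conjugate_by n V W = mmul n V (mmul n W (adjoint V))"

lemma unitary_conjugate_by:
  "unitary_mat n V \<Longrightarrow> unitary_mat n W \<Longrightarrow> unitary_mat n (conjugate_by n V W)"
  by (simp add: conjugate_by_def unitary_mmul unitary_adjoint)

lemma mm_step_conj:
  assumes V: "unitary_mat n V" and Acc: "commutes_proj n V Acc" and Rej: "commutes_proj n V Rej"
    and \<psi>: "supported n (fst c)"
  shows "mm_step n Acc Rej (apfst (mvec n V) c) (conjugate_by n V W)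
       = apfst (mvec n V) (mm_step n Acc Rej c W)"
proof -
  have Non: "commutes_proj n V ({..<n} - Acc - Rej)"
    using Acc Rej by (auto simp: commutes_proj_def)
  have "mvec n (conjugate_by n V W) (mvec n V (fst c)) = mvec n V (mvec n W (fst c))"
    by (simp add: conjugate_by_def mvec_mmul mvec_adjoint_mvec[OF V \<psi>])
  then show ?thesis
    by (cases c) (simp add: mm_step_def Let_def proj_mvec[OF Non] proj_mvec[OF Acc]
        proj_mvec[OF Rej] sqnorm_mvec[OF V])
qed

lemma foldl_mm_step_conj:
  assumes V: "unitary_mat n V" and Acc: "commutes_proj n V Acc" and Rej: "commutes_proj n V Rej"
  shows "supported n (fst c) \<Longrightarrow>
    foldl (mm_step n Acc Rej) (apfst (mvec n V) c) (map (conjugate_by n V) Ws)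
      = apfst (mvec n V) (foldl (mm_step n Acc Rej) c Ws)"
proof (induction Ws arbitrary: c)
  case (Cons W Ws)
  then show ?case
    by (simp add: mm_step_conj[OF V Acc Rej] supported_mm_step)
qed simp

lemma mm_step_total_probability:
  assumes W: "unitary_mat n W" and AR: "Acc \<inter> Rej = {}"
    and step: "mm_step n Acc Rej (\<psi>, p, r) W = (\<psi>', p', r')"
  shows "sqnorm n \<psi>' + p' + r' = sqnorm n \<psi> + p + r"
proof -
  let ?\<phi> = "mvec n W \<psi>"
  have "sqnorm n \<psi>' + (p' - p) + (r' - r)
      = (\<Sum>i<n. (cmod (proj ({..<n} - Acc - Rej) ?\<phi> i))\<^sup>2 + (cmod (proj Acc ?\<phi> i))\<^sup>2
                 + (cmod (proj Rej ?\<phi> i))\<^sup>2)"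
    using step by (auto simp: mm_step_def Let_def sqnorm_def sum.distrib)
  also have "\<dots> = sqnorm n ?\<phi>"
    unfolding sqnorm_def using AR by (intro sum.cong) (auto simp: proj_def)
  also have "\<dots> = sqnorm n \<psi>"
    by (rule sqnorm_mvec[OF W])
  finally show ?thesis
    by simp
qed

section \<open>Householder reflections\<close>

definition householder :: "nat \<Rightarrow> cvec \<Rightarrow> cmat" where
  "householder m u =
     (\<lambda>i j. (if i = j then 1 else 0) - 2 * u i * cnj (u j) / complex_of_real (sqnorm m u))"

lemma adjoint_householder: "adjoint (householder m u) = householder m u"
  by (simp add: adjoint_def householder_def fun_eq_iff)

lemma householder_mult_self:
  assumes i: "i < m" and k: "k < m"
  shows "(\<Sum>j<m. householder m u i j * householder m u j k) = (if i = k then 1 else 0)"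
proof (cases "sqnorm m u = 0")
  case True
  then show ?thesis
    using i k by (simp add: householder_def delta_mult)
next
  case False
  define c where "c = complex_of_real (sqnorm m u)"
  have "(\<Sum>j<m. householder m u i j * householder m u j k)
      = (\<Sum>j<m. (if i = j then 1 else 0) * (if j = k then 1 else 0))
        - (\<Sum>j<m. (if i = j then 1 else 0) * (2 * u j * cnj (u k) / c))
        - (\<Sum>j<m. (2 * u i * cnj (u j) / c) * (if j = k then 1 else 0))
        + (\<Sum>j<m. (2 * u i * cnj (u j) / c) * (2 * u j * cnj (u k) / c))"
    unfolding householder_def c_def[symmetric]
    by (simp add: sum_subtractf sum.distrib algebra_simps)
  also have "\<dots> = (if i = k then 1 else 0) - 4 * u i * cnj (u k) / c
        + (\<Sum>j<m. (2 * u i * cnj (u j) / c) * (2 * u j * cnj (u k) / c))"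
    using i k by (simp add: delta_mult mult_delta sum_divide_distrib[symmetric])
  also have "\<dots> = (if i = k then 1 else 0) - 4 * u i * cnj (u k) / c
        + 4 * u i * cnj (u k) * (\<Sum>j<m. u j * cnj (u j)) / (c * c)"
    by (simp add: sum_distrib_left sum_divide_distrib algebra_simps)
  also have "\<dots> = (if i = k then 1 else 0)"
    using False by (simp add: c_def sqnorm_eq_sum_cnj[symmetric] field_simps)
  finally show ?thesis .
qed

lemma unitary_householder: "unitary_mat m (householder m u)"
proof -
  have "cnj (householder m u j i) = householder m u i j" for i j
    using adjoint_householder[of m u] by (simp add: adjoint_def fun_eq_iff)
  then show ?thesis
    by (simp add: unitary_mat_def householder_mult_self)
qed

lemma commutes_proj_householder:
  assumes "\<forall>i<m. i \<in> S \<longrightarrow> u i = 0"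
  shows "commutes_proj m (householder m u) S"
  using assms by (auto simp: commutes_proj_def householder_def)

definition ket :: "nat \<Rightarrow> cvec" where
  "ket q = (\<lambda>i. if i = q then 1 else 0)"

lemma cnj_ket: "cnj (ket k j) = ket k j"
  by (simp add: ket_def)

lemma sum_mult_ket: "k < m \<Longrightarrow> (\<Sum>j<m. f j * ket k j) = f k"
  by (simp add: ket_def mult_delta)

lemma sqnorm_ket: "q < n \<Longrightarrow> sqnorm n (ket q) = 1"
  by (simp add: sqnorm_def ket_def if_distrib[of cmod] if_distrib[of "\<lambda>x. x\<^sup>2"]
      cong: if_cong)

(* As v k is real, |v - ket k|^2 = 2 (1 - v k) is twice the inner product of v - ket k with v,
   which is what makes the reflection along v - ket k send v to ket k.  When v = ket k the
   reflection vector is 0 and, since x / 0 = 0, householder degenerates to the identity. *)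
lemma householder_reflects_to_ket:
  assumes k: "k < m" and v: "sqnorm m v = 1" and vk: "v k = complex_of_real x"
  shows "mvec m (householder m (\<lambda>i. v i - ket k i)) v = ket k"
proof -
  define u where "u = (\<lambda>i. v i - ket k i)"
  have vnorm: "(\<Sum>j<m. v j * cnj (v j)) = 1"
    using v by (simp add: sqnorm_eq_sum_cnj[symmetric])
  have inner: "(\<Sum>j<m. cnj (u j) * v j) = 1 - v k"
  proof -
    have "(\<Sum>j<m. cnj (u j) * v j) = (\<Sum>j<m. v j * cnj (v j)) - (\<Sum>j<m. v j * ket k j)"
      by (simp add: u_def cnj_ket algebra_simps sum_subtractf)
    then show ?thesis
      using k vnorm by (simp add: sum_mult_ket)
  qed
  have norm: "complex_of_real (sqnorm m u) = 2 * (1 - v k)"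
  proof -
    have "complex_of_real (sqnorm m u) = (\<Sum>j<m. v j * cnj (v j)) - (\<Sum>j<m. v j * ket k j)
        - (\<Sum>j<m. cnj (v j) * ket k j) + (\<Sum>j<m. ket k j * ket k j)"
      by (simp add: sqnorm_eq_sum_cnj u_def cnj_ket algebra_simps sum_subtractf sum.distrib)
    also have "\<dots> = 1 - v k - cnj (v k) + 1"
      using k vnorm by (simp add: sum_mult_ket) (simp add: ket_def)
    finally show ?thesis
      using vk by simp
  qed
  show ?thesis
    unfolding u_def[symmetric]
  proof
    fix i
    show "mvec m (householder m u) v i = ket k i"
    proof (cases "i < m \<and> sqnorm m u \<noteq> 0")
      case True
      then have "mvec m (householder m u) v i = v i - 2 * u i * (1 - v k) / (2 * (1 - v k))"
        by (simp add: mvec_def householder_def norm inner[symmetric] delta_mult mult_delta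
            sum_subtractf sum_distrib_left sum_divide_distrib algebra_simps)
      also have "\<dots> = v i - u i"
      proof -
        have "2 - 2 * v k \<noteq> 0"
          using True norm by auto
        then show ?thesis
          by (simp add: field_simps)
      qed
      also have "\<dots> = ket k i"
        by (simp add: u_def)
      finally show ?thesis .
    next
      case False
      then show ?thesis
        using k by (auto simp: mvec_def householder_def ket_def u_def sqnorm_eq_0_iff delta_mult)
    qed
  qed
qed

section \<open>Three extra states and the simulating automaton\<close>

definition pad_mat :: "nat \<Rightarrow> cmat \<Rightarrow> cmat" where
  "pad_mat n W = (\<lambda>i j. if i < n \<and> j < n then W i j
     else if (i = n \<and> j = Suc n) \<or> (i = Suc n \<and> j = n) \<or> (i = Suc (Suc n) \<and> j = Suc (Suc n))
     then 1 else 0)"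

definition pad_vec :: "nat \<Rightarrow> cvec \<Rightarrow> complex \<Rightarrow> complex \<Rightarrow> cvec" where
  "pad_vec n \<phi> t g =
     (\<lambda>i. if i < n then \<phi> i else if i = n then t else if i = Suc (Suc n) then g else 0)"

lemma unitary_pad_mat:
  assumes W: "unitary_mat n W"
  shows "unitary_mat (Suc (Suc (Suc n))) (pad_mat n W)"
  unfolding unitary_mat_def
proof (intro conjI allI impI)
  fix i k assume i: "i < Suc (Suc (Suc n))" and k: "k < Suc (Suc (Suc n))"
  show "(\<Sum>j<Suc (Suc (Suc n)). cnj (pad_mat n W j i) * pad_mat n W j k) = (if i = k then 1 else 0)"
  proof (cases "i < n \<and> k < n")
    case True
    have "(\<Sum>j<n. cnj (pad_mat n W j i) * pad_mat n W j k) = (\<Sum>j<n. cnj (W j i) * W j k)"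
      using True by (intro sum.cong) (auto simp: pad_mat_def)
    then show ?thesis
      using True by (simp add: pad_mat_def unitary_matD[OF W])
  next
    case False
    have "(\<Sum>j<n. cnj (pad_mat n W j i) * pad_mat n W j k) = 0"
      using False by (intro sum.neutral) (auto simp: pad_mat_def)
    then show ?thesis
      using False i k by (auto simp: pad_mat_def less_Suc_eq)
  qed
next
  fix i k assume i: "i < Suc (Suc (Suc n))" and k: "k < Suc (Suc (Suc n))"
  show "(\<Sum>j<Suc (Suc (Suc n)). pad_mat n W i j * cnj (pad_mat n W k j)) = (if i = k then 1 else 0)"
  proof (cases "i < n \<and> k < n")
    case True
    have "(\<Sum>j<n. pad_mat n W i j * cnj (pad_mat n W k j)) = (\<Sum>j<n. W i j * cnj (W k j))"
      using True by (intro sum.cong) (auto simp: pad_mat_def)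
    then show ?thesis
      using True by (simp add: pad_mat_def unitary_matD[OF W])
  next
    case False
    have "(\<Sum>j<n. pad_mat n W i j * cnj (pad_mat n W k j)) = 0"
      using False by (intro sum.neutral) (auto simp: pad_mat_def)
    then show ?thesis
      using False i k by (auto simp: pad_mat_def less_Suc_eq)
  qed
qed

lemma mvec_pad_mat:
  "mvec (Suc (Suc (Suc n))) (pad_mat n W) (pad_vec n \<phi> t g)
     = (\<lambda>i. if i < n then mvec n W \<phi> i
          else if i = Suc n then t else if i = Suc (Suc n) then g else 0)"
proof
  fix i
  have "(\<Sum>j<n. pad_mat n W i j * pad_vec n \<phi> t g j) = (if i < n then mvec n W \<phi> i else 0)"
    by (auto simp: pad_mat_def pad_vec_def mvec_def intro: sum.cong sum.neutral)
  then show "mvec (Suc (Suc (Suc n))) (pad_mat n W) (pad_vec n \<phi> t g) i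
     = (if i < n then mvec n W \<phi> i
        else if i = Suc n then t else if i = Suc (Suc n) then g else 0)"
    by (auto simp: mvec_def pad_mat_def pad_vec_def less_Suc_eq)
qed

lemma mm_step_pad:
  assumes Acc: "Acc \<subseteq> {..<n}" and Rej: "Rej \<subseteq> {..<n}"
  shows "mm_step (Suc (Suc (Suc n))) (insert (Suc n) Acc) Rej
      (pad_vec n \<phi> t g, p, r) (pad_mat n W)
    = (pad_vec n (proj ({..<n} - Acc - Rej) (mvec n W \<phi>)) 0 g,
       p + sqnorm n (proj Acc (mvec n W \<phi>)) + (cmod t)\<^sup>2,
       r + sqnorm n (proj Rej (mvec n W \<phi>)))"
proof -
  let ?y = "\<lambda>i. if i < n then mvec n W \<phi> i
      else if i = Suc n then t else if i = Suc (Suc n) then g else 0"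
  have "proj ({..<Suc (Suc (Suc n))} - insert (Suc n) Acc - Rej) ?y
      = pad_vec n (proj ({..<n} - Acc - Rej) (mvec n W \<phi>)) 0 g"
    using Acc Rej by (auto simp: proj_def pad_vec_def fun_eq_iff)
  moreover have "sqnorm (Suc (Suc (Suc n))) (proj (insert (Suc n) Acc) ?y)
      = sqnorm n (proj Acc (mvec n W \<phi>)) + (cmod t)\<^sup>2"
    using Acc by (auto simp: sqnorm_def proj_def intro!: sum.cong)
  moreover have "sqnorm (Suc (Suc (Suc n))) (proj Rej ?y) = sqnorm n (proj Rej (mvec n W \<phi>))"
    using Rej by (auto simp: sqnorm_def proj_def intro!: sum.cong)
  ultimately show ?thesis
    by (simp add: mm_step_def Let_def mvec_pad_mat)
qed

lemma supported_pad_vec: "supported (Suc (Suc (Suc n))) (pad_vec n \<phi> t g)"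
  by (simp add: supported_def pad_vec_def)

lemma sqnorm_pad_vec:
  "sqnorm (Suc (Suc (Suc n))) (pad_vec n \<phi> t g) = sqnorm n \<phi> + (cmod t)\<^sup>2 + (cmod g)\<^sup>2"
  by (simp add: sqnorm_def pad_vec_def)

(* The amplitude t of the start state is paid out as acceptance probability only when the first
   symbol is read, hence the nonempty input. *)
lemma acc_foldl_mm_step_pad:
  assumes Acc: "Acc \<subseteq> {..<n}" and Rej: "Rej \<subseteq> {..<n}"
  shows "Ws \<noteq> [] \<Longrightarrow>
    fst (snd (foldl (mm_step (Suc (Suc (Suc n))) (insert (Suc n) Acc) Rej)
      (pad_vec n \<psi> t g, p, r) (map (pad_mat n) Ws)))
    = fst (snd (foldl (mm_step n Acc Rej) (\<psi>, p + (cmod t)\<^sup>2, r') Ws))"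
proof (induction Ws arbitrary: \<psi> t p r r')
  case (Cons W Ws)
  define \<phi> where "\<phi> = mvec n W \<psi>"
  define a where "a = sqnorm n (proj Acc \<phi>)"
  have "mm_step n Acc Rej (\<psi>, p + (cmod t)\<^sup>2, r') W
      = (proj ({..<n} - Acc - Rej) \<phi>, p + a + (cmod t)\<^sup>2, r' + sqnorm n (proj Rej \<phi>))"
    by (simp add: mm_step_def Let_def \<phi>_def a_def)
  then show ?case
    using Cons.IH[of _ 0]
    by (cases "Ws = []") (simp_all add: mm_step_pad[OF Acc Rej] \<phi>_def a_def)
qed simp

definition start_vec :: "nat \<Rightarrow> cmat \<Rightarrow> nat \<Rightarrow> nat set \<Rightarrow> nat set \<Rightarrow> cvec" where
  "start_vec n Uc q0 Acc Rej =
     (case mm_step n Acc Rej (ket q0, 0, 0) Uc of (\<psi>, a, r) \<Rightarrow>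
        pad_vec n \<psi> (complex_of_real (sqrt a)) (complex_of_real (sqrt r)))"

definition start_reflection :: "nat \<Rightarrow> cmat \<Rightarrow> nat \<Rightarrow> nat set \<Rightarrow> nat set \<Rightarrow> cmat" where
  "start_reflection n Uc q0 Acc Rej =
     householder (Suc (Suc (Suc n))) (\<lambda>i. start_vec n Uc q0 Acc Rej i - ket n i)"

definition right_marker_unitaries ::
    "nat \<Rightarrow> cmat \<Rightarrow> ('a option \<Rightarrow> cmat) \<Rightarrow> nat \<Rightarrow> nat set \<Rightarrow> nat set \<Rightarrow> 'a option \<Rightarrow> cmat"
  where
  "right_marker_unitaries n Uc U q0 Acc Rej \<sigma> =
     conjugate_by (Suc (Suc (Suc n))) (start_reflection n Uc q0 Acc Rej) (pad_mat n (U \<sigma>))"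

lemma sqnorm_start_vec:
  assumes "mmqfa2 n Uc U q0 Acc Rej"
  shows "sqnorm (Suc (Suc (Suc n))) (start_vec n Uc q0 Acc Rej) = 1"
proof -
  obtain \<psi> a r where step: "mm_step n Acc Rej (ket q0, 0, 0) Uc = (\<psi>, a, r)"
    by (metis prod.exhaust)
  have Uc: "unitary_mat n Uc" and AR: "Acc \<inter> Rej = {}" and q0: "q0 < n"
    using assms by (simp_all add: mmqfa2_def mmqfa1_def)
  have "a \<ge> 0" "r \<ge> 0"
    using step by (auto simp: mm_step_def Let_def sqnorm_nonneg)
  moreover have "sqnorm n \<psi> + a + r = sqnorm n (ket q0)"
    using mm_step_total_probability[OF Uc AR step] by simp
  moreover have "sqnorm n (ket q0) = 1"
    using q0 by (rule sqnorm_ket)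
  ultimately show ?thesis
    by (simp add: start_vec_def step sqnorm_pad_vec)
qed

lemma start_reflection_start_vec:
  assumes "mmqfa2 n Uc U q0 Acc Rej"
  shows "mvec (Suc (Suc (Suc n))) (start_reflection n Uc q0 Acc Rej) (start_vec n Uc q0 Acc Rej)
    = ket n"
proof -
  obtain \<psi> a r where step: "mm_step n Acc Rej (ket q0, 0, 0) Uc = (\<psi>, a, r)"
    by (metis prod.exhaust)
  show ?thesis
    unfolding start_reflection_def
    by (rule householder_reflects_to_ket[OF _ sqnorm_start_vec[OF assms], where x = "sqrt a"])
      (simp_all add: start_vec_def step pad_vec_def)
qed

lemma commutes_proj_start_reflection:
  assumes "mmqfa2 n Uc U q0 Acc Rej" and "S \<subseteq> insert (Suc n) (Acc \<union> Rej)"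
  shows "commutes_proj (Suc (Suc (Suc n))) (start_reflection n Uc q0 Acc Rej) S"
  unfolding start_reflection_def
  using assms
  by (intro commutes_proj_householder)
    (auto simp: mmqfa2_def mmqfa1_def start_vec_def pad_vec_def ket_def mm_step_def Let_def
      proj_def split: prod.split)

lemma mmqfa1_right_marker_unitaries:
  assumes "mmqfa2 n Uc U q0 Acc Rej"
  shows "mmqfa1 (Suc (Suc (Suc n))) (right_marker_unitaries n Uc U q0 Acc Rej) n
    (insert (Suc n) Acc) Rej"
  using assms
  by (auto simp: mmqfa1_def mmqfa2_def right_marker_unitaries_def start_reflection_def
      intro!: unitary_conjugate_by unitary_householder unitary_pad_mat)

lemma acc1_right_marker_unitaries:
  assumes M: "mmqfa2 n Uc U q0 Acc Rej"
  shows "acc1 (Suc (Suc (Suc n))) (right_marker_unitaries n Uc U q0 Acc Rej) n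
    (insert (Suc n) Acc) Rej x = acc2 n Uc U q0 Acc Rej x"
proof -
  let ?N = "Suc (Suc (Suc n))" and ?Acc' = "insert (Suc n) Acc"
    and ?V = "start_reflection n Uc q0 Acc Rej" and ?v = "start_vec n Uc q0 Acc Rej"
  define Ws where "Ws = map (\<lambda>a. U (Some a)) x @ [U None]"
  obtain \<psi> a r where step: "mm_step n Acc Rej (ket q0, 0, 0) Uc = (\<psi>, a, r)"
    by (metis prod.exhaust)
  have Acc: "Acc \<subseteq> {..<n}" and Rej: "Rej \<subseteq> {..<n}" and "0 \<le> a"
    using M step by (auto simp: mmqfa2_def mmqfa1_def mm_step_def Let_def sqnorm_nonneg)
  have V: "unitary_mat ?N ?V"
    by (simp add: start_reflection_def unitary_householder)
  have "acc1 ?N (right_marker_unitaries n Uc U q0 Acc Rej) n ?Acc' Rej x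
      = fst (snd (foldl (mm_step ?N ?Acc' Rej) (apfst (mvec ?N ?V) (?v, 0, 0))
          (map (conjugate_by ?N ?V) (map (pad_mat n) Ws))))"
    by (simp add: acc1_def mm_acc_run_def Ws_def start_reflection_start_vec[OF M] ket_def
        right_marker_unitaries_def comp_def)
  also have "\<dots> = fst (snd (foldl (mm_step ?N ?Acc' Rej) (?v, 0, 0) (map (pad_mat n) Ws)))"
  proof -
    have "supported ?N (fst (?v, 0::real, 0::real))"
      by (simp add: start_vec_def step supported_pad_vec)
    moreover have "commutes_proj ?N ?V ?Acc'" and "commutes_proj ?N ?V Rej"
      by (auto intro: commutes_proj_start_reflection[OF M])
    ultimately show ?thesis
      using foldl_mm_step_conj[OF V]
      by (simp only: snd_apfst)
  qed
  also have "\<dots> = fst (snd (foldl (mm_step n Acc Rej) (\<psi>, a, r) Ws))"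
    using acc_foldl_mm_step_pad[OF Acc Rej, of Ws \<psi> "complex_of_real (sqrt a)" _ 0 _ r] \<open>0 \<le> a\<close>
    by (simp add: start_vec_def step Ws_def)
  also have "\<dots> = acc2 n Uc U q0 Acc Rej x"
    by (simp add: acc2_def mm_acc_run_def Ws_def step[symmetric] ket_def)
  finally show ?thesis .
qed

theorem theoremA2:
  fixes n :: nat and Uc :: "nat \<Rightarrow> nat \<Rightarrow> complex"
    and U :: "'a::finite option \<Rightarrow> nat \<Rightarrow> nat \<Rightarrow> complex"
    and q0 :: nat and Acc Rej :: "nat set"
  assumes "mmqfa2 n Uc U q0 Acc Rej"
  shows "\<exists>n' (U' :: 'a option \<Rightarrow> nat \<Rightarrow> nat \<Rightarrow> complex) q0' Acc' Rej'.
           mmqfa1 n' U' q0' Acc' Rej' \<and>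
           (\<forall>x. acc1 n' U' q0' Acc' Rej' x = acc2 n Uc U q0 Acc Rej x)"
  using mmqfa1_right_marker_unitaries[OF assms] acc1_right_marker_unitaries[OF assms] by blast

end
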